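(* Let $X,Y$ be Banach lattices and let $\mathcal S$ be a family of convex continuous operators $X\to Y$ such that $\sup_{S\in\mathcal S}\|Sx\|<\infty$ for all $x\in X$. Then: (i) there exists $r>0$ with $\sup_{S\in\mathcal S}\|S\|_r<\infty$; (ii) for every $x_0\in X$ there exists $r>0$ with $\sup_{x\in B(x_0,r)}\sup_{S\in\mathcal S}\|S_x\|_r<\infty$.
   Context: An operator $S\colon X\to Y$ is convex if $S(\lambda x+(1-\lambda)y)\le\lambda Sx+(1-\lambda)Sy$ for all $x,y\in X$, $\lambda\in[0,1]$. $B(x_0,r):=\{x\in X:\|x-x_0\|\le r\}$, $\|S\|_r:=\sup_{x\in B(0,r)}\|Sx\|$, and $S_x y:=S(x+y)-Sx$ for $x,y\in X$. *)

theory Defs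
  imports "HOL-Analysis.Analysis"
begin

class banach_lattice = banach + ordered_real_vector + lattice +
  assumes lattice_norm: "sup x (- x) \<le> sup y (- y) \<Longrightarrow> norm x \<le> norm y"

definition convex_operator :: "('a::real_vector \<Rightarrow> 'b::ordered_real_vector) \<Rightarrow> bool" where
  "convex_operator S \<longleftrightarrow>
     (\<forall>x y. \<forall>t::real. 0 \<le> t \<and> t \<le> 1 \<longrightarrow>
        S (t *\<^sub>R x + (1 - t) *\<^sub>R y) \<le> t *\<^sub>R S x + (1 - t) *\<^sub>R S y)"

definition op_rnorm :: "('a::real_normed_vector \<Rightarrow> 'b::real_normed_vector) \<Rightarrow> real \<Rightarrow> ereal" where
  "op_rnorm S r = (SUP x\<in>cball 0 r. ereal (norm (S x)))"

definition shift_op :: "('a::real_vector \<Rightarrow> 'b::real_vector) \<Rightarrow> 'a \<Rightarrow> 'a \<Rightarrow> 'b" where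
  "shift_op S x = (\<lambda>y. S (x + y) - S x)"

end

theory Submission
  imports Defs
begin

text \<open>
  By Baire's theorem the closed sets \<open>{x. \<forall>S\<in>\<S>. \<parallel>S x\<parallel> \<le> n}\<close> cannot all have
  empty interior, so the family is uniformly bounded on some ball \<open>B(x\<^sub>1, e)\<close>.
  Convexity moves this to any \<open>x\<^sub>0\<close>: with \<open>p = 2x\<^sub>0 - x\<^sub>1\<close>, every \<open>z\<close> near \<open>x\<^sub>0\<close> is
  the midpoint of \<open>p\<close> and a point of \<open>B(x\<^sub>1, e)\<close>, giving an upper bound
  \<open>S z \<le> w\<close> with \<open>\<parallel>w\<parallel>\<close> controlled; reflecting \<open>z\<close> through \<open>x\<^sub>0\<close> gives a lower bound
  \<open>2 S x\<^sub>0 - w' \<le> S z\<close>. In a Banach lattice an element squeezed between two others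
  has norm at most the sum of their norms, so \<open>S\<close> is uniformly bounded near \<open>x\<^sub>0\<close>,
  and both claims follow.
\<close>

lemma abs_nonneg_banach_lattice:
  fixes a :: "'a::banach_lattice"
  shows "0 \<le> sup a (- a)"
proof -
  have "a + - a \<le> sup a (- a) + sup a (- a)"
    by (intro add_mono) auto
  then have "0 \<le> (1/2) *\<^sub>R (sup a (- a) + sup a (- a))"
    by (intro scaleR_nonneg_nonneg) auto
  then show ?thesis
    by (simp add: scaleR_add_right flip: scaleR_add_left)
qed

lemma norm_abs_banach_lattice:
  fixes a :: "'a::banach_lattice"
  shows "norm (sup a (- a)) \<le> norm a"
proof (rule lattice_norm)
  have "- sup a (- a) \<le> sup a (- a)"
    using abs_nonneg_banach_lattice[of a] by (meson neg_le_0_iff_le order_trans)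
  then show "sup (sup a (- a)) (- sup a (- a)) \<le> sup a (- a)"
    by simp
qed

lemma norm_le_norm_add_norm_if_between:
  fixes a b z :: "'a::banach_lattice"
  assumes "a \<le> z" "z \<le> b"
  shows "norm z \<le> norm a + norm b"
proof -
  define A B where "A = sup a (- a)" and "B = sup b (- b)"
  have "0 \<le> A" "0 \<le> B"
    unfolding A_def B_def by (rule abs_nonneg_banach_lattice)+
  have "z \<le> B"
    using assms(2) unfolding B_def by (meson order_trans sup_ge1)
  with \<open>0 \<le> A\<close> have "z \<le> A + B"
    by (simp add: add_increasing)
  moreover have "- z \<le> A"
    using assms(1) unfolding A_def by (meson neg_le_iff_le order_trans sup_ge2)
  with \<open>0 \<le> B\<close> have "- z \<le> A + B"
    by (simp add: add_increasing2)
  ultimately have "sup z (- z) \<le> sup (A + B) (- (A + B))"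
    by (meson le_supI le_supI1)
  then have "norm z \<le> norm (A + B)"
    by (rule lattice_norm)
  also have "\<dots> \<le> norm A + norm B"
    by (rule norm_triangle_ineq)
  also have "\<dots> \<le> norm a + norm b"
    unfolding A_def B_def by (intro add_mono norm_abs_banach_lattice)
  finally show ?thesis .
qed

lemma convex_operator_midpoint:
  assumes "convex_operator S"
  shows "S ((1/2) *\<^sub>R u + (1/2) *\<^sub>R v) \<le> (1/2) *\<^sub>R S u + (1/2) *\<^sub>R S v"
  using assms[unfolded convex_operator_def, rule_format, where x = u and y = v and t = "1/2"]
  by simp

lemma convex_operator_upper_bound_near:
  fixes S :: "'a::real_normed_vector \<Rightarrow> 'b::{real_normed_vector, ordered_real_vector}"
  assumes "convex_operator S" and bounded: "\<forall>u\<in>ball x1 e. norm (S u) \<le> M"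
    and "z \<in> ball x0 (e/2)"
  obtains w where "S z \<le> w" "norm w \<le> (M + norm (S (2 *\<^sub>R x0 - x1))) / 2"
proof
  define p where "p = 2 *\<^sub>R x0 - x1"
  define w where "w = (1/2) *\<^sub>R S (2 *\<^sub>R z - p) + (1/2) *\<^sub>R S p"
  have "S ((1/2) *\<^sub>R (2 *\<^sub>R z - p) + (1/2) *\<^sub>R p) \<le> w"
    unfolding w_def by (rule convex_operator_midpoint[OF assms(1)])
  then show "S z \<le> w"
    by (simp add: algebra_simps)
  have "2 *\<^sub>R z - p - x1 = 2 *\<^sub>R (z - x0)"
    unfolding p_def by (simp add: algebra_simps)
  then have "dist (2 *\<^sub>R z - p) x1 = 2 * dist z x0"
    by (simp add: dist_norm)
  then have "norm (S (2 *\<^sub>R z - p)) \<le> M"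
    using bounded \<open>z \<in> ball x0 (e/2)\<close> by (simp add: dist_commute)
  have "norm w \<le> norm ((1/2) *\<^sub>R S (2 *\<^sub>R z - p)) + norm ((1/2) *\<^sub>R S p)"
    unfolding w_def by (rule norm_triangle_ineq)
  also have "\<dots> \<le> (M + norm (S p)) / 2"
    using \<open>norm (S (2 *\<^sub>R z - p)) \<le> M\<close> by simp
  finally show "norm w \<le> (M + norm (S (2 *\<^sub>R x0 - x1))) / 2"
    unfolding p_def .
qed

lemma convex_operator_norm_bound_near:
  fixes S :: "'a::real_normed_vector \<Rightarrow> 'b::banach_lattice"
  assumes "convex_operator S"
    and upper: "\<And>z. z \<in> ball x0 \<delta> \<Longrightarrow> \<exists>w. S z \<le> w \<and> norm w \<le> K"
    and "z \<in> ball x0 \<delta>"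
  shows "norm (S z) \<le> 2 * norm (S x0) + 2 * K"
proof -
  define z' where "z' = 2 *\<^sub>R x0 - z"
  have "z' \<in> ball x0 \<delta>"
    using \<open>z \<in> ball x0 \<delta>\<close> unfolding z'_def
    by (simp add: dist_norm algebra_simps scaleR_2 norm_minus_commute)
  obtain w where "S z \<le> w" "norm w \<le> K"
    using upper[OF \<open>z \<in> ball x0 \<delta>\<close>] by blast
  obtain w' where "S z' \<le> w'" "norm w' \<le> K"
    using upper[OF \<open>z' \<in> ball x0 \<delta>\<close>] by blast
  have "S x0 = S ((1/2) *\<^sub>R z + (1/2) *\<^sub>R z')"
    unfolding z'_def by (simp add: algebra_simps)
  also have "\<dots> \<le> (1/2) *\<^sub>R S z + (1/2) *\<^sub>R S z'"
    by (rule convex_operator_midpoint[OF assms(1)])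
  also have "\<dots> \<le> (1/2) *\<^sub>R S z + (1/2) *\<^sub>R w'"
    using \<open>S z' \<le> w'\<close> by (simp add: scaleR_left_mono)
  finally have "2 *\<^sub>R S x0 \<le> 2 *\<^sub>R ((1/2) *\<^sub>R S z + (1/2) *\<^sub>R w')"
    by (rule scaleR_left_mono) simp
  then have "2 *\<^sub>R S x0 - w' \<le> S z"
    by (simp add: scaleR_add_right diff_le_eq)
  then have "norm (S z) \<le> norm (2 *\<^sub>R S x0 - w') + norm w"
    using \<open>S z \<le> w\<close> by (rule norm_le_norm_add_norm_if_between)
  also have "\<dots> \<le> 2 * norm (S x0) + norm w' + norm w"
    using norm_triangle_ineq4[of "2 *\<^sub>R S x0" w'] by simp
  finally show ?thesis
    using \<open>norm w \<le> K\<close> \<open>norm w' \<le> K\<close> by linarith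
qed

lemma convex_operator_bounded_near:
  fixes S :: "'a::real_normed_vector \<Rightarrow> 'b::banach_lattice"
  assumes "convex_operator S" and "\<forall>u\<in>ball x1 e. norm (S u) \<le> M"
    and "z \<in> ball x0 (e/2)"
  shows "norm (S z) \<le> 2 * norm (S x0) + M + norm (S (2 *\<^sub>R x0 - x1))"
proof -
  define K where "K = (M + norm (S (2 *\<^sub>R x0 - x1))) / 2"
  have upper: "\<exists>w. S y \<le> w \<and> norm w \<le> K" if "y \<in> ball x0 (e/2)" for y
    unfolding K_def by (rule convex_operator_upper_bound_near[OF assms(1,2) that]) blast
  have "norm (S z) \<le> 2 * norm (S x0) + 2 * K"
    using assms(1) upper assms(3) by (rule convex_operator_norm_bound_near)
  then show ?thesis
    unfolding K_def by argo
qed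

lemma Baire_pointwise_bounded_imp_bounded_on_ball:
  fixes F :: "('a::complete_space \<Rightarrow> 'b::real_normed_vector) set"
  assumes cont: "\<And>f. f \<in> F \<Longrightarrow> continuous_on UNIV f"
    and bounded: "\<And>x. \<exists>M. \<forall>f\<in>F. norm (f x) \<le> M"
  obtains x e M where "e > 0" "\<forall>f\<in>F. \<forall>z\<in>ball x e. norm (f z) \<le> M"
proof -
  define C where "C n = (\<Inter>f\<in>F. {x. norm (f x) \<le> real n})" for n :: nat
  have closed_C: "closed (C n)" for n
    unfolding C_def using cont
    by (intro closed_INT ballI closed_Collect_le continuous_on_norm) auto
  have "\<exists>n. x \<in> C n" for x
  proof -
    obtain M where "\<forall>f\<in>F. norm (f x) \<le> M"
      using bounded by blast
    moreover obtain n :: nat where "M \<le> real n"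
      using real_arch_simple by blast
    ultimately have "\<forall>f\<in>F. norm (f x) \<le> real n"
      by (meson order_trans)
    then show ?thesis
      unfolding C_def by blast
  qed
  then have "\<Union>(range C) = UNIV"
    by blast
  have "\<exists>n. interior (C n) \<noteq> {}"
  proof (rule ccontr)
    assume "\<nexists>n. interior (C n) \<noteq> {}"
    then have "euclidean interior_of \<Union>(range C) = {}"
      using closed_C
      by (intro Baire_category_alt)
        (auto simp: completely_metrizable_space_euclidean simp flip: closed_closedin)
    then show False
      using \<open>\<Union>(range C) = UNIV\<close> by simp
  qed
  then obtain n x where "x \<in> interior (C n)"
    by blast
  then obtain e where "e > 0" "ball x e \<subseteq> C n"
    by (meson open_contains_ball open_interior interior_subset subset_trans)
  then show thesis
    using that[of e x "real n"] unfolding C_def by blast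
qed

lemma convex_operators_uniformly_bounded_near:
  fixes \<S> :: "('a::banach \<Rightarrow> 'b::banach_lattice) set"
  assumes conv: "\<And>S. S \<in> \<S> \<Longrightarrow> convex_operator S"
    and cont: "\<And>S. S \<in> \<S> \<Longrightarrow> continuous_on UNIV S"
    and bounded: "\<And>x. \<exists>M. \<forall>S\<in>\<S>. norm (S x) \<le> M"
  obtains r M where "r > 0" "\<forall>S\<in>\<S>. \<forall>z\<in>cball x0 r. norm (S z) \<le> M"
proof -
  obtain x1 e M where "e > 0" and M: "\<forall>S\<in>\<S>. \<forall>u\<in>ball x1 e. norm (S u) \<le> M"
    by (rule Baire_pointwise_bounded_imp_bounded_on_ball[OF cont bounded])
  obtain C0 where C0: "\<forall>S\<in>\<S>. norm (S x0) \<le> C0"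
    using bounded by blast
  obtain Cp where Cp: "\<forall>S\<in>\<S>. norm (S (2 *\<^sub>R x0 - x1)) \<le> Cp"
    using bounded by blast
  have "\<forall>S\<in>\<S>. \<forall>z\<in>cball x0 (e/4). norm (S z) \<le> 2 * C0 + M + Cp"
  proof (intro ballI)
    fix S z assume S: "S \<in> \<S>" and z: "z \<in> cball x0 (e/4)"
    have "z \<in> ball x0 (e/2)"
      using z \<open>e > 0\<close> by simp
    moreover have "\<forall>u\<in>ball x1 e. norm (S u) \<le> M"
      using M S by blast
    ultimately have "norm (S z) \<le> 2 * norm (S x0) + M + norm (S (2 *\<^sub>R x0 - x1))"
      using conv[OF S] by (intro convex_operator_bounded_near)
    moreover have "norm (S x0) \<le> C0" "norm (S (2 *\<^sub>R x0 - x1)) \<le> Cp"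
      using C0 Cp S by auto
    ultimately show "norm (S z) \<le> 2 * C0 + M + Cp"
      by linarith
  qed
  with \<open>e > 0\<close> show thesis
    by (intro that[of "e/4"]) simp_all
qed

lemma SUP_ereal_less_PInf_imp_bounded:
  fixes f :: "'i \<Rightarrow> real"
  assumes "(SUP i\<in>I. ereal (f i)) < \<infinity>"
  shows "\<exists>M. \<forall>i\<in>I. f i \<le> M"
proof -
  obtain n :: nat where n: "(SUP i\<in>I. ereal (f i)) < ereal (real n)"
    using assms less_PInf_Ex_of_nat by auto
  have "f i \<le> real n" if "i \<in> I" for i
    using le_less_trans[OF SUP_upper[OF that] n] by simp
  then show ?thesis
    by blast
qed

lemma op_rnorm_le:
  assumes "\<And>x. x \<in> cball 0 r \<Longrightarrow> norm (S x) \<le> M"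
  shows "op_rnorm S r \<le> ereal M"
  unfolding op_rnorm_def using assms by (simp add: SUP_le_iff)

lemma norm_shift_op_le:
  fixes S :: "'a::real_normed_vector \<Rightarrow> 'b::real_normed_vector"
  assumes "\<forall>z\<in>cball x0 r. norm (S z) \<le> M" "x \<in> cball x0 (r/2)" "y \<in> cball 0 (r/2)"
  shows "norm (shift_op S x y) \<le> 2 * M"
proof -
  have "dist x0 x \<le> r/2" "dist x (x + y) \<le> r/2"
    using assms(2,3) by (simp_all add: dist_norm)
  then have "x \<in> cball x0 r" "x + y \<in> cball x0 r"
    using dist_triangle[of x0 "x + y" x] zero_le_dist[of x0 x] unfolding mem_cball by linarith+
  then have "norm (S (x + y)) \<le> M" "norm (S x) \<le> M"
    using assms(1) by blast+
  then show ?thesis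
    unfolding shift_op_def using norm_triangle_ineq4[of "S (x + y)" "S x"] by linarith
qed

theorem theoremA9:
  fixes \<S> :: "('a::banach_lattice \<Rightarrow> 'b::banach_lattice) set"
  assumes conv: "\<And>S. S \<in> \<S> \<Longrightarrow> convex_operator S"
    and cont: "\<And>S. S \<in> \<S> \<Longrightarrow> continuous_on UNIV S"
    and ptw: "\<And>x. (SUP S\<in>\<S>. ereal (norm (S x))) < \<infinity>"
  shows "(\<exists>r>0. (SUP S\<in>\<S>. op_rnorm S r) < \<infinity>)
       \<and> (\<forall>x0. \<exists>r>0. (SUP x\<in>cball x0 r. SUP S\<in>\<S>. op_rnorm (shift_op S x) r) < \<infinity>)"
proof -
  have "\<exists>M. \<forall>S\<in>\<S>. norm (S x) \<le> M" for x
    using SUP_ereal_less_PInf_imp_bounded[OF ptw] .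
  note near = convex_operators_uniformly_bounded_near[OF conv cont this]
  show ?thesis
  proof (intro conjI allI)
    obtain r M where "r > 0" and M: "\<forall>S\<in>\<S>. \<forall>z\<in>cball 0 r. norm (S z) \<le> M"
      by (rule near)
    then have "(SUP S\<in>\<S>. op_rnorm S r) \<le> ereal M"
      by (intro SUP_least op_rnorm_le) auto
    then have "(SUP S\<in>\<S>. op_rnorm S r) < \<infinity>"
      by (rule order.strict_trans1) simp
    with \<open>r > 0\<close> show "\<exists>r>0. (SUP S\<in>\<S>. op_rnorm S r) < \<infinity>"
      by blast
  next
    fix x0 :: 'a
    obtain r M where "r > 0" and M: "\<forall>S\<in>\<S>. \<forall>z\<in>cball x0 r. norm (S z) \<le> M"
      by (rule near)
    have "(SUP x\<in>cball x0 (r/2). SUP S\<in>\<S>. op_rnorm (shift_op S x) (r/2)) \<le> ereal (2 * M)"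
      using M by (intro SUP_least op_rnorm_le norm_shift_op_le[of x0 r]) auto
    then have "(SUP x\<in>cball x0 (r/2). SUP S\<in>\<S>. op_rnorm (shift_op S x) (r/2)) < \<infinity>"
      by (rule order.strict_trans1) simp
    with \<open>r > 0\<close> show "\<exists>r>0. (SUP x\<in>cball x0 r. SUP S\<in>\<S>. op_rnorm (shift_op S x) r) < \<infinity>"
      by (intro exI[of _ "r/2"]) simp
  qed
qed

end
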